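(* For all real $\varepsilon\ge0$: $\mathsf{PC}_\mathbb{R}\equiv_W\mathsf{P}_{>\varepsilon}\mathsf{C}_\mathbb{R}$, where $\mathbb R$ carries Lebesgue measure.
   Context: A represented space is a pair $(X,\delta_X)$ with $\delta_X:\subseteq\mathbb{N}^\mathbb{N}\to X$ a partial surjection; $\mathbb R$ carries its Cauchy representation. A realizer of $f:\subseteq X\rightrightarrows Y$ is a partial $F$ with $\delta_Y F(p)\in f(\delta_X(p))$ for all $p\in\mathrm{dom}(f\circ\delta_X)$. $f\le_W g$ if there are computable partial $H,K:\subseteq\mathbb{N}^\mathbb{N}\to\mathbb{N}^\mathbb{N}$ such that $p\mapsto H\langle p,GK(p)\rangle$ realizes $f$ for every realizer $G$ of $g$; $\equiv_W$ is the induced equivalence. $\mathcal{A}_-(\mathbb R)$ denotes the closed subsets of $\mathbb R$ represented by negative information (a name of $A$ enumerates rational open intervals whose union is $\mathbb R\setminus A$). For $\varepsilon\in\mathbb R$, $\mathsf{P}_{>\varepsilon}\mathsf{C}_\mathbb R:\subseteq\mathcal A_-(\mathbb R)\rightrightarrows\mathbb R$, $A\mapsto A$, is defined on closed $A$ with Lebesgue measure $\lambda(A)>\varepsilon$, and $\mathsf{PC}_\mathbb R:=\mathsf P_{>0}\mathsf C_\mathbb R$. *)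

theory Defs
  imports "HOL-Analysis.Analysis" "HOL-Library.Nat_Bijection"
begin

datatype recf = Zero | Succ | Proj nat | Comp recf "recf list" | PrimRec recf recf | Mu recf

inductive eval :: "recf \<Rightarrow> nat list \<Rightarrow> nat \<Rightarrow> bool" where
  eval_Zero: "eval Zero xs 0"
| eval_Succ: "eval Succ (x # xs) (Suc x)"
| eval_Proj: "i < length xs \<Longrightarrow> eval (Proj i) xs (xs ! i)"
| eval_Comp: "length ys = length gs \<Longrightarrow> (\<forall>i<length gs. eval (gs ! i) xs (ys ! i))
     \<Longrightarrow> eval f ys z \<Longrightarrow> eval (Comp f gs) xs z"
| eval_PrimRec0: "eval f xs z \<Longrightarrow> eval (PrimRec f g) (0 # xs) z"
| eval_PrimRecS: "eval (PrimRec f g) (n # xs) y \<Longrightarrow> eval g (y # n # xs) z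
     \<Longrightarrow> eval (PrimRec f g) (Suc n # xs) z"
| eval_Mu: "eval f (n # xs) 0 \<Longrightarrow> (\<forall>m<n. \<exists>y. eval f (m # xs) (Suc y))
     \<Longrightarrow> eval (Mu f) xs n"

type_synonym baire = "nat \<Rightarrow> nat"

text \<open>Type-2 computation via a partial recursive code e: the n-th output digit is
  q n iff, scanning prefixes of p of increasing length k, e answers 0 ("need more input")
  on all shorter prefixes and Suc (q n) on the prefix of length k.\<close>
definition prefix_code :: "baire \<Rightarrow> nat \<Rightarrow> nat" where
  "prefix_code p k = list_encode (map p [0..<k])"

definition computes :: "recf \<Rightarrow> baire \<Rightarrow> baire \<Rightarrow> bool" where
  "computes e p q \<longleftrightarrow> (\<forall>n. \<exists>k. eval e [n, prefix_code p k] (Suc (q n))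
       \<and> (\<forall>j<k. eval e [n, prefix_code p j] 0))"

definition comp_fun :: "recf \<Rightarrow> baire \<Rightarrow> baire option" where
  "comp_fun e p = (if \<exists>q. computes e p q then Some (THE q. computes e p q) else None)"

definition pairB :: "baire \<Rightarrow> baire \<Rightarrow> baire" where
  "pairB p q n = (if even n then p (n div 2) else q (n div 2))"

text \<open>A problem f :: 'a \<Rightarrow> 'b set; its domain is {x. f x \<noteq> {}}.
  A representation is a partial map baire \<Rightarrow> 'a option.\<close>

definition realizer :: "(baire \<Rightarrow> 'a option) \<Rightarrow> (baire \<Rightarrow> 'b option) \<Rightarrow> ('a \<Rightarrow> 'b set)
    \<Rightarrow> (baire \<Rightarrow> baire option) \<Rightarrow> bool" where
  "realizer \<delta>X \<delta>Y f F \<longleftrightarrow> (\<forall>p x. \<delta>X p = Some x \<and> f x \<noteq> {} \<longrightarrow>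
      (\<exists>q y. F p = Some q \<and> \<delta>Y q = Some y \<and> y \<in> f x))"

definition weihrauch_le ::
  "(baire \<Rightarrow> 'a option) \<Rightarrow> (baire \<Rightarrow> 'b option) \<Rightarrow> ('a \<Rightarrow> 'b set) \<Rightarrow>
   (baire \<Rightarrow> 'c option) \<Rightarrow> (baire \<Rightarrow> 'd option) \<Rightarrow> ('c \<Rightarrow> 'd set) \<Rightarrow> bool" where
  "weihrauch_le \<delta>X \<delta>Y f \<delta>Z \<delta>W g \<longleftrightarrow> (\<exists>eH eK. \<forall>G. realizer \<delta>Z \<delta>W g G \<longrightarrow>
      realizer \<delta>X \<delta>Y f (\<lambda>p. case comp_fun eK p of None \<Rightarrow> None
                               | Some k \<Rightarrow> (case G k of None \<Rightarrow> None
                                           | Some r \<Rightarrow> comp_fun eH (pairB p r))))"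

definition weihrauch_eq ::
  "(baire \<Rightarrow> 'a option) \<Rightarrow> (baire \<Rightarrow> 'b option) \<Rightarrow> ('a \<Rightarrow> 'b set) \<Rightarrow>
   (baire \<Rightarrow> 'c option) \<Rightarrow> (baire \<Rightarrow> 'd option) \<Rightarrow> ('c \<Rightarrow> 'd set) \<Rightarrow> bool" where
  "weihrauch_eq \<delta>X \<delta>Y f \<delta>Z \<delta>W g \<longleftrightarrow>
     weihrauch_le \<delta>X \<delta>Y f \<delta>Z \<delta>W g \<and> weihrauch_le \<delta>Z \<delta>W g \<delta>X \<delta>Y f"

definition rat_dec :: "nat \<Rightarrow> real" where
  "rat_dec n = (case prod_decode n of (a, b) \<Rightarrow> real_of_int (int_decode a) / real (Suc b))"

definition delta_R :: "baire \<Rightarrow> real option" where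
  "delta_R p = (if \<exists>x. \<forall>n. \<bar>rat_dec (p n) - x\<bar> \<le> (1/2) ^ n
                then Some (THE x. \<forall>n. \<bar>rat_dec (p n) - x\<bar> \<le> (1/2) ^ n) else None)"

definition interval_dec :: "nat \<Rightarrow> real set" where
  "interval_dec k = (case prod_decode k of (a, b) \<Rightarrow> {rat_dec a <..< rat_dec b})"

text \<open>Negative information: p n = 0 enumerates nothing, p n = Suc k enumerates interval k;
  the named set is the complement of the union of the enumerated intervals.\<close>
definition delta_A :: "baire \<Rightarrow> real set option" where
  "delta_A p = Some (- (\<Union>n\<in>{n. p n \<noteq> 0}. interval_dec (p n - 1)))"

definition P_gt_C_R :: "real \<Rightarrow> real set \<Rightarrow> real set" where
  "P_gt_C_R \<epsilon> A = (if closed A \<and> emeasure lborel A > ennreal \<epsilon> then A else {})"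

definition PC_R :: "real set \<Rightarrow> real set" where
  "PC_R = P_gt_C_R 0"

end

theory Submission
  imports Defs
begin

text \<open>\<open>P\<^sub>>\<^sub>\<epsilon>C\<^sub>\<real>\<close> is a restriction of \<open>PC\<^sub>\<real>\<close>, which gives one reduction for free. For the
  other, a name of a closed set \<open>A\<close> of positive measure is turned into a name of the closed
  set \<open>B\<close> whose part in the block \<open>[3j, 3j + 1]\<close> is a translate of \<open>A \<inter> [m\<^sub>j, m\<^sub>j + 1]\<close>,
  where every integer occurs as \<open>m\<^sub>j\<close> for infinitely many \<open>j\<close>. Some unit piece of \<open>A\<close> has
  positive measure, so \<open>B\<close> contains arbitrarily many disjoint translates of it and its
  measure exceeds \<open>\<epsilon>\<close>. A point of \<open>B\<close> lies in a block \<open>j\<close> that can be read off from a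
  \<open>1/4\<close>-approximation of it, and translating it back yields a point of \<open>A\<close>.\<close>

section \<open>Total recursive functions\<close>

lemma eval_deterministic: "eval e xs y \<Longrightarrow> eval e xs z \<Longrightarrow> y = z"
proof (induction arbitrary: z rule: eval.induct)
  case (eval_Comp ys gs xs f z z')
  from eval_Comp.prems show ?case
  proof (cases rule: eval.cases)
    case (eval_Comp ys')
    have "ys' = ys"
    proof (rule nth_equalityI)
      show "length ys' = length ys" using eval_Comp eval_Comp.hyps by simp
      fix i assume "i < length ys'"
      then show "ys' ! i = ys ! i" using eval_Comp eval_Comp.hyps eval_Comp.IH by auto
    qed
    then show ?thesis using eval_Comp eval_Comp.IH by auto
  qed
next
  case (eval_PrimRecS f g n xs y z)
  from eval_PrimRecS.prems show ?case
    by (cases rule: eval.cases) (use eval_PrimRecS.IH in auto)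
next
  case (eval_Mu f n xs)
  from eval_Mu.prems show ?case
  proof (cases rule: eval.cases)
    case eval_Mu
    show ?thesis
    proof (rule ccontr)
      assume "n \<noteq> z"
      then consider "n < z" | "z < n" by linarith
      then show False
      proof cases
        case 1
        then obtain y where "eval f (n # xs) (Suc y)" using eval_Mu(2) by blast
        then show False using eval_Mu.IH(1) by fastforce
      next
        case 2
        then obtain y where "eval f (z # xs) (Suc y)" "\<forall>w. eval f (z # xs) w \<longrightarrow> Suc y = w"
          using eval_Mu.IH(2) by blast
        then show False using eval_Mu(1) by fastforce
      qed
    qed
  qed
qed (erule eval.cases; auto)+

definition recursive :: "nat \<Rightarrow> (nat list \<Rightarrow> nat) \<Rightarrow> bool" where
  "recursive n f \<longleftrightarrow> (\<exists>e. \<forall>xs. length xs = n \<longrightarrow> eval e xs (f xs))"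

named_theorems recursive_intros

lemma recursive_cong:
  "recursive m f \<Longrightarrow> m = n \<Longrightarrow> (\<And>xs. length xs = n \<Longrightarrow> f xs = g xs) \<Longrightarrow> recursive n g"
  unfolding recursive_def by metis

lemma recursive_proj [recursive_intros]: "i < n \<Longrightarrow> recursive n (\<lambda>xs. xs ! i)"
  unfolding recursive_def by (auto intro: eval_Proj)

lemma recursive_compose:
  assumes "recursive m g" "length hs = m" "\<forall>h\<in>set hs. recursive n h"
  shows "recursive n (\<lambda>xs. g (map (\<lambda>h. h xs) hs))"
proof -
  obtain eg where eg: "\<forall>xs. length xs = m \<longrightarrow> eval eg xs (g xs)"
    using assms(1) recursive_def by auto
  have "\<exists>es. length es = length hs \<and>
      (\<forall>i<length hs. \<forall>xs. length xs = n \<longrightarrow> eval (es!i) xs ((hs!i) xs))"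
    using assms(3)
  proof (induction hs)
    case (Cons h hs)
    then obtain es where "length es = length hs"
      "\<forall>i<length hs. \<forall>xs. length xs = n \<longrightarrow> eval (es!i) xs ((hs!i) xs)" by auto
    moreover obtain e where "\<forall>xs. length xs = n \<longrightarrow> eval e xs (h xs)"
      using Cons.prems recursive_def by auto
    ultimately show ?case
      by (intro exI[of _ "e # es"]) (auto simp: nth_Cons split: nat.split)
  qed simp
  then obtain es where "length es = length hs"
    "\<forall>i<length hs. \<forall>xs. length xs = n \<longrightarrow> eval (es!i) xs ((hs!i) xs)" by auto
  then have "eval (Comp eg es) xs (g (map (\<lambda>h. h xs) hs))" if "length xs = n" for xs
    using eg assms(2) that by (intro eval_Comp[where ys="map (\<lambda>h. h xs) hs"]) auto
  then show ?thesis unfolding recursive_def by blast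
qed

lemma recursive_compose1:
  "recursive 1 (\<lambda>xs. g (xs!0)) \<Longrightarrow> recursive n f \<Longrightarrow> recursive n (\<lambda>xs. g (f xs))"
  using recursive_compose[of 1 "\<lambda>xs. g (xs!0)" "[f]" n] by simp

lemma recursive_compose2:
  "recursive 2 (\<lambda>xs. g (xs!0) (xs!1)) \<Longrightarrow> recursive n f1 \<Longrightarrow> recursive n f2 \<Longrightarrow>
   recursive n (\<lambda>xs. g (f1 xs) (f2 xs))"
  using recursive_compose[of 2 "\<lambda>xs. g (xs!0) (xs!1)" "[f1, f2]" n] by simp

lemma recursive_compose3:
  "recursive 3 (\<lambda>xs. g (xs!0) (xs!1) (xs!2)) \<Longrightarrow> recursive n f1 \<Longrightarrow> recursive n f2 \<Longrightarrow>
   recursive n f3 \<Longrightarrow> recursive n (\<lambda>xs. g (f1 xs) (f2 xs) (f3 xs))"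
  using recursive_compose[of 3 "\<lambda>xs. g (xs!0) (xs!1) (xs!2)" "[f1, f2, f3]" n] by simp

lemma recursive_Suc [recursive_intros]: "recursive n f \<Longrightarrow> recursive n (\<lambda>xs. Suc (f xs))"
proof -
  have "recursive 1 (\<lambda>xs. Suc (xs!0))" unfolding recursive_def
    by (rule exI[of _ Succ]) (auto simp: length_Suc_conv intro: eval_Succ)
  then show "recursive n f \<Longrightarrow> recursive n (\<lambda>xs. Suc (f xs))" by (rule recursive_compose1)
qed

lemma recursive_const [recursive_intros]: "recursive n (\<lambda>_. c)"
proof (induction c)
  case 0
  show ?case unfolding recursive_def by (auto intro: eval_Zero)
qed (rule recursive_Suc)

lemma recursive_primrec:
  assumes "recursive n f" "recursive (Suc (Suc n)) g"
  shows "recursive (Suc n) (\<lambda>xs. rec_nat (f (tl xs)) (\<lambda>i y. g (y # i # tl xs)) (hd xs))"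
proof -
  obtain ef where ef: "\<forall>xs. length xs = n \<longrightarrow> eval ef xs (f xs)"
    using assms(1) recursive_def by auto
  obtain eg where eg: "\<forall>xs. length xs = Suc (Suc n) \<longrightarrow> eval eg xs (g xs)"
    using assms(2) recursive_def by auto
  have eval_rec: "eval (PrimRec ef eg) (i # xs) (rec_nat (f xs) (\<lambda>i y. g (y # i # xs)) i)"
    if "length xs = n" for i xs
  proof (induction i)
    case 0
    show ?case using ef that by (simp add: eval_PrimRec0)
  next
    case (Suc i)
    then show ?case using eg that by (auto intro: eval_PrimRecS)
  qed
  show ?thesis unfolding recursive_def
  proof (intro exI[of _ "PrimRec ef eg"] allI impI)
    fix xs :: "nat list"
    assume "length xs = Suc n"
    then show "eval (PrimRec ef eg) xs (rec_nat (f (tl xs)) (\<lambda>i y. g (y # i # tl xs)) (hd xs))"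
      using eval_rec by (cases xs) auto
  qed
qed

lemma recursive_Least:
  assumes "recursive (Suc n) g" "\<And>xs. length xs = n \<Longrightarrow> \<exists>m. g (m # xs) = 0"
  shows "recursive n (\<lambda>xs. LEAST m. g (m # xs) = 0)"
proof -
  obtain e where e: "\<forall>xs. length xs = Suc n \<longrightarrow> eval e xs (g xs)"
    using assms(1) recursive_def by auto
  have "eval (Mu e) xs (LEAST m. g (m # xs) = 0)" if "length xs = n" for xs
  proof (rule eval_Mu)
    show "eval e ((LEAST m. g (m # xs) = 0) # xs) 0"
      using e that assms(2)[OF that] by (metis (mono_tags) LeastI length_Cons)
    show "\<forall>m<(LEAST m. g (m # xs) = 0). \<exists>y. eval e (m # xs) (Suc y)"
      using e that by (metis (mono_tags) length_Cons not0_implies_Suc not_less_Least)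
  qed
  then show ?thesis unfolding recursive_def by blast
qed


lemma recursive_add [recursive_intros]:
  assumes "recursive n f" "recursive n g"
  shows "recursive n (\<lambda>xs. f xs + g xs)"
proof -
  have rec: "rec_nat b (\<lambda>i y. Suc y) a = a + b" for a b :: nat by (induction a) auto
  have "recursive 2 (\<lambda>xs. xs!0 + xs!1)"
    by (rule recursive_cong[OF recursive_primrec[of 1 "\<lambda>ys. ys!0" "\<lambda>ys. Suc (ys!0)"]])
      (auto simp: length_Suc_conv numeral_2_eq_2 rec intro: recursive_intros)
  from recursive_compose2[OF this assms] show ?thesis .
qed

lemma recursive_mult [recursive_intros]:
  assumes "recursive n f" "recursive n g"
  shows "recursive n (\<lambda>xs. f xs * g xs)"
proof -
  have rec: "rec_nat 0 (\<lambda>i y. y + b) a = a * b" for a b :: nat by (induction a) auto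
  have "recursive 2 (\<lambda>xs. xs!0 * xs!1)"
    by (rule recursive_cong[OF recursive_primrec[of 1 "\<lambda>ys. 0" "\<lambda>ys. ys!0 + ys!2"]])
      (auto simp: length_Suc_conv numeral_2_eq_2 numeral_3_eq_3 rec intro: recursive_intros)
  from recursive_compose2[OF this assms] show ?thesis .
qed

lemma recursive_pred:
  assumes "recursive n f"
  shows "recursive n (\<lambda>xs. f xs - 1)"
proof -
  have rec: "rec_nat 0 (\<lambda>i y. i) a = a - 1" for a :: nat by (cases a) auto
  have "recursive 1 (\<lambda>xs. xs!0 - 1)"
    by (rule recursive_cong[OF recursive_primrec[of 0 "\<lambda>ys. 0" "\<lambda>ys. ys!1"]])
      (auto simp: length_Suc_conv rec intro: recursive_intros)
  from recursive_compose1[OF this assms] show ?thesis .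
qed

lemma recursive_diff [recursive_intros]:
  assumes "recursive n f" "recursive n g"
  shows "recursive n (\<lambda>xs. f xs - g xs)"
proof -
  have rec: "rec_nat a (\<lambda>i y. y - Suc 0) b = a - b" for a b :: nat by (induction b) auto
  have "recursive 2 (\<lambda>xs. xs!1 - xs!0)"
    by (rule recursive_cong[OF recursive_primrec[OF recursive_proj recursive_pred[OF recursive_proj]]])
      (auto simp: length_Suc_conv numeral_2_eq_2 rec)
  from recursive_compose2[OF this assms(2,1)] show ?thesis .
qed

lemma recursive_if_zero [recursive_intros]:
  assumes "recursive n c" "recursive n f" "recursive n g"
  shows "recursive n (\<lambda>xs. if c xs = 0 then f xs else g xs)"
proof -
  have rec: "rec_nat t (\<lambda>i y. e) c = (if c = 0 then t else e)" for c t e :: nat by (cases c) auto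
  have "recursive 3 (\<lambda>xs. if xs!0 = 0 then xs!1 else xs!2)"
    by (rule recursive_cong[OF recursive_primrec[of 2 "\<lambda>ys. ys!0" "\<lambda>ys. ys!3"]])
      (auto simp: length_Suc_conv numeral_2_eq_2 numeral_3_eq_3 rec intro: recursive_intros)
  from recursive_compose3[OF this assms] show ?thesis .
qed

lemma recursive_if_le [recursive_intros]:
  assumes "recursive n a" "recursive n b" "recursive n f" "recursive n g"
  shows "recursive n (\<lambda>xs. if a xs \<le> b xs then f xs else g xs)"
proof -
  have "recursive n (\<lambda>xs. if a xs - b xs = 0 then f xs else g xs)"
    using assms by (intro recursive_intros)
  then show ?thesis by (rule recursive_cong) auto
qed

lemma recursive_if_less [recursive_intros]:
  assumes "recursive n a" "recursive n b" "recursive n f" "recursive n g"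
  shows "recursive n (\<lambda>xs. if a xs < b xs then f xs else g xs)"
proof -
  have "recursive n (\<lambda>xs. if b xs \<le> a xs then g xs else f xs)"
    using assms by (intro recursive_intros)
  then show ?thesis by (rule recursive_cong) auto
qed

lemma recursive_if_eq [recursive_intros]:
  assumes "recursive n a" "recursive n b" "recursive n f" "recursive n g"
  shows "recursive n (\<lambda>xs. if a xs = b xs then f xs else g xs)"
proof -
  have "recursive n (\<lambda>xs. if (a xs - b xs) + (b xs - a xs) = 0 then f xs else g xs)"
    using assms by (intro recursive_intros)
  then show ?thesis by (rule recursive_cong) auto
qed

lemma recursive_div2 [recursive_intros]:
  assumes "recursive n f"
  shows "recursive n (\<lambda>xs. f xs div 2)"
proof -
  let ?g = "\<lambda>ys. if ys!1 < 2 * ys!0 + 2 then 0 else 1 :: nat"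
  have "recursive 1 (\<lambda>xs. LEAST m. ?g (m # xs) = 0)"
  proof (rule recursive_Least)
    show "recursive (Suc 1) ?g" by (intro recursive_intros) simp_all
    show "\<exists>m. ?g (m # xs) = 0" for xs :: "nat list" by (rule exI[of _ "xs!0"]) simp
  qed
  moreover have "(LEAST m. ?g (m # xs) = 0) = xs!0 div 2" for xs :: "nat list"
    by (rule Least_equality) (auto split: if_splits)
  ultimately have "recursive 1 (\<lambda>xs. xs!0 div 2)" by simp
  from recursive_compose1[OF this assms] show ?thesis .
qed

lemma recursive_if_even [recursive_intros]:
  assumes "recursive n a" "recursive n f" "recursive n g"
  shows "recursive n (\<lambda>xs. if even (a xs) then f xs else g xs)"
proof -
  have "recursive n (\<lambda>xs. if a xs \<le> 2 * (a xs div 2) then f xs else g xs)"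
    using assms by (intro recursive_intros)
  moreover have "a \<le> 2 * (a div 2) \<longleftrightarrow> even a" for a :: nat by presburger
  ultimately show ?thesis by simp
qed


lemma recursive_prod_encode [recursive_intros]:
  "recursive n f \<Longrightarrow> recursive n g \<Longrightarrow> recursive n (\<lambda>xs. prod_encode (f xs, g xs))"
  unfolding prod_encode_def triangle_def by (simp, intro recursive_intros)

definition prod_decode_diagonal :: "nat \<Rightarrow> nat" where
  "prod_decode_diagonal m = (LEAST s. m < triangle (Suc s))"

lemma prod_decode_diagonal_eq: "prod_decode_diagonal m = fst (prod_decode m) + snd (prod_decode m)"
proof -
  obtain x y where xy: "prod_decode m = (x, y)" by (cases "prod_decode m")
  have m: "m = triangle (x + y) + x"
    using prod_decode_inverse[of m] xy by (simp add: prod_encode_def)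
  have mono: "triangle a \<le> triangle b" if "a \<le> b" for a b
    using that by (induction b) (auto simp: le_Suc_eq)
  have "prod_decode_diagonal m = x + y" unfolding prod_decode_diagonal_def
  proof (rule Least_equality)
    show "m < triangle (Suc (x + y))" using m by simp
    fix s assume "m < triangle (Suc s)"
    then show "x + y \<le> s" using m mono[of "Suc s" "x + y"] by (cases "x + y \<le> s") auto
  qed
  then show ?thesis using xy by simp
qed

lemma fst_prod_decode: "fst (prod_decode m) = m - triangle (prod_decode_diagonal m)"
proof -
  obtain x y where xy: "prod_decode m = (x, y)" by (cases "prod_decode m")
  then have "m = triangle (x + y) + x"
    using prod_decode_inverse[of m] by (simp add: prod_encode_def)
  then show ?thesis using xy prod_decode_diagonal_eq[of m] by simp
qed

lemma snd_prod_decode: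
  "snd (prod_decode m) = prod_decode_diagonal m - (m - triangle (prod_decode_diagonal m))"
  using prod_decode_diagonal_eq[of m] fst_prod_decode[of m] by simp

lemma recursive_prod_decode_diagonal:
  assumes "recursive n f"
  shows "recursive n (\<lambda>xs. prod_decode_diagonal (f xs))"
proof -
  let ?g = "\<lambda>ys. if ys!1 < triangle (Suc (ys!0)) then 0 else 1 :: nat"
  have "recursive 1 (\<lambda>xs. LEAST m. ?g (m # xs) = 0)"
  proof (rule recursive_Least)
    show "recursive (Suc 1) ?g"
      unfolding triangle_def by (intro recursive_intros) simp_all
    show "\<exists>m. ?g (m # xs) = 0" for xs :: "nat list" by (rule exI[of _ "xs!0"]) simp
  qed
  moreover have "(LEAST m. ?g (m # xs) = 0) = prod_decode_diagonal (xs!0)" for xs :: "nat list"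
    unfolding prod_decode_diagonal_def by (rule arg_cong[where f=Least]) (auto split: if_splits)
  ultimately have "recursive 1 (\<lambda>xs. prod_decode_diagonal (xs!0))" by simp
  from recursive_compose1[OF this assms] show ?thesis .
qed

lemma recursive_fst_prod_decode [recursive_intros]:
  "recursive n f \<Longrightarrow> recursive n (\<lambda>xs. fst (prod_decode (f xs)))"
  unfolding fst_prod_decode triangle_def
  by (intro recursive_intros recursive_prod_decode_diagonal)

lemma recursive_snd_prod_decode [recursive_intros]:
  "recursive n f \<Longrightarrow> recursive n (\<lambda>xs. snd (prod_decode (f xs)))"
  unfolding snd_prod_decode triangle_def
  by (intro recursive_intros recursive_prod_decode_diagonal)

definition list_drop_code :: "nat \<Rightarrow> nat \<Rightarrow> nat" where
  "list_drop_code i c = rec_nat c (\<lambda>_ y. snd (prod_decode (y - 1))) i"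

definition list_nth_code :: "nat \<Rightarrow> nat \<Rightarrow> nat" where
  "list_nth_code i c = fst (prod_decode (list_drop_code i c - 1))"

text \<open>The factor \<open>c - i\<close> bounds the search, since a list is never longer than its code.\<close>

definition list_length_code :: "nat \<Rightarrow> nat" where
  "list_length_code c = (LEAST i. list_drop_code i c * (c - i) = 0)"

lemma list_tl_code_encode: "snd (prod_decode (list_encode xs - 1)) = list_encode (tl xs)"
proof (cases xs)
  case Nil
  then show ?thesis by (simp add: prod_decode_def prod_decode_aux.simps)
qed simp

lemma list_drop_code_encode: "list_drop_code i (list_encode xs) = list_encode (drop i xs)"
proof (induction i)
  case (Suc i)
  then show ?case using list_tl_code_encode[of "drop i xs"] by (simp add: list_drop_code_def drop_Suc drop_tl)
qed (simp add: list_drop_code_def)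

lemma list_nth_code_encode:
  assumes "i < length xs"
  shows "list_nth_code i (list_encode xs) = xs ! i"
proof -
  have "drop i xs = xs ! i # drop (Suc i) xs" using assms by (rule Cons_nth_drop_Suc[symmetric])
  then show ?thesis by (simp add: list_nth_code_def list_drop_code_encode)
qed

lemma length_le_list_encode: "length xs \<le> list_encode xs"
  by (induction xs) (auto intro: le_trans[OF _ le_prod_encode_2])

lemma list_length_code_encode: "list_length_code (list_encode xs) = length xs"
  unfolding list_length_code_def
proof (rule Least_equality)
  show "list_drop_code (length xs) (list_encode xs) * (list_encode xs - length xs) = 0"
    by (simp add: list_drop_code_encode)
  fix i
  assume "list_drop_code i (list_encode xs) * (list_encode xs - i) = 0"
  then have "list_encode (drop i xs) = 0 \<or> list_encode xs \<le> i"
    by (simp add: list_drop_code_encode)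
  then show "length xs \<le> i"
    using length_le_list_encode[of xs] by (cases "drop i xs") auto
qed

lemma recursive_list_drop_code [recursive_intros]:
  assumes "recursive n f" "recursive n g"
  shows "recursive n (\<lambda>xs. list_drop_code (f xs) (g xs))"
proof -
  have "recursive 2 (\<lambda>xs. list_drop_code (xs!0) (xs!1))"
    by (rule recursive_cong[OF recursive_primrec[of 1 "\<lambda>ys. ys!0" "\<lambda>ys. snd (prod_decode (ys!0 - 1))"]])
      (auto simp: length_Suc_conv numeral_2_eq_2 list_drop_code_def intro!: recursive_intros)
  from recursive_compose2[OF this assms] show ?thesis .
qed

lemma recursive_list_nth_code [recursive_intros]:
  "recursive n f \<Longrightarrow> recursive n g \<Longrightarrow> recursive n (\<lambda>xs. list_nth_code (f xs) (g xs))"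
  unfolding list_nth_code_def by (intro recursive_intros)

lemma recursive_list_length_code [recursive_intros]:
  assumes "recursive n f"
  shows "recursive n (\<lambda>xs. list_length_code (f xs))"
proof -
  let ?g = "\<lambda>ys. list_drop_code (ys!0) (ys!1) * (ys!1 - ys!0)"
  have "recursive 1 (\<lambda>xs. LEAST m. ?g (m # xs) = 0)"
  proof (rule recursive_Least)
    show "recursive (Suc 1) ?g" by (intro recursive_intros) simp_all
    show "\<exists>m. ?g (m # xs) = 0" for xs :: "nat list" by (rule exI[of _ "xs!0"]) simp
  qed
  then have "recursive 1 (\<lambda>xs. list_length_code (xs!0))" by (simp add: list_length_code_def)
  from recursive_compose1[OF this assms] show ?thesis .
qed


section \<open>Computable maps on Baire space and Weihrauch reductions\<close>

lemma computes_unique: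
  assumes "computes e p q" "computes e p q'"
  shows "q = q'"
proof
  fix n
  obtain k where k: "eval e [n, prefix_code p k] (Suc (q n))" "\<forall>j<k. eval e [n, prefix_code p j] 0"
    using assms(1) unfolding computes_def by blast
  obtain k' where k': "eval e [n, prefix_code p k'] (Suc (q' n))" "\<forall>j<k'. eval e [n, prefix_code p j] 0"
    using assms(2) unfolding computes_def by blast
  have "\<not> k < k'" "\<not> k' < k"
    using k k' eval_deterministic by (metis nat.distinct(1))+
  then have "k = k'" by simp
  then show "q n = q' n" using k(1) k'(1) eval_deterministic by blast
qed

lemma comp_fun_eqI:
  assumes "computes e p q"
  shows "comp_fun e p = Some q"
proof -
  have "(THE q. computes e p q) = q"
    using assms computes_unique by (intro the_equality) blast+
  then show ?thesis using assms by (auto simp: comp_fun_def)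
qed

lemma prefix_code_length: "list_length_code (prefix_code p k) = k"
  by (simp add: prefix_code_def list_length_code_encode)

lemma prefix_code_nth: "i < k \<Longrightarrow> list_nth_code i (prefix_code p k) = p i"
  by (simp add: prefix_code_def list_nth_code_encode)

text \<open>The code answers \<open>0\<close> (``more input'') until the prefix has length \<open>need n + 1\<close>.\<close>

lemma comp_fun_locally_recursive:
  fixes \<Phi> :: "nat \<Rightarrow> baire \<Rightarrow> nat" and need :: "nat \<Rightarrow> nat"
  assumes rec: "recursive 2 (\<lambda>xs. \<Phi> (xs!0) (\<lambda>i. list_nth_code i (xs!1)))"
    and rec_need: "recursive 1 (\<lambda>xs. need (xs!0))"
    and locality: "\<And>n p p'. (\<forall>i\<le>need n. p i = p' i) \<Longrightarrow> \<Phi> n p = \<Phi> n p'"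
  shows "\<exists>e. \<forall>p. comp_fun e p = Some (\<lambda>n. \<Phi> n p)"
proof -
  define F where "F xs = (if need (xs!0) < list_length_code (xs!1)
    then Suc (\<Phi> (xs!0) (\<lambda>i. list_nth_code i (xs!1))) else 0)" for xs
  have "recursive 2 (\<lambda>xs. need (xs!0))"
    using recursive_compose1[OF rec_need recursive_proj[of 0 2]] by simp
  then have "recursive 2 F"
    unfolding F_def by (intro recursive_intros rec) simp_all
  then obtain e where e: "\<And>xs. length xs = 2 \<Longrightarrow> eval e xs (F xs)"
    unfolding recursive_def by blast
  have F_prefix: "F [n, prefix_code p k] = (if need n < k then Suc (\<Phi> n p) else 0)" for p n k
  proof -
    have "\<Phi> n (\<lambda>i. list_nth_code i (prefix_code p k)) = \<Phi> n p" if "need n < k"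
      using that by (intro locality) (simp add: prefix_code_nth)
    then show ?thesis by (simp add: F_def prefix_code_length)
  qed
  have "computes e p (\<lambda>n. \<Phi> n p)" for p
    unfolding computes_def
  proof
    fix n
    have ev: "eval e [n, prefix_code p k] (if need n < k then Suc (\<Phi> n p) else 0)" for k
      using e[of "[n, prefix_code p k]"] by (simp add: F_prefix)
    show "\<exists>k. eval e [n, prefix_code p k] (Suc (\<Phi> n p)) \<and> (\<forall>j<k. eval e [n, prefix_code p j] 0)"
    proof (intro exI[of _ "Suc (need n)"] conjI allI impI)
      show "eval e [n, prefix_code p (Suc (need n))] (Suc (\<Phi> n p))" using ev[of "Suc (need n)"] by simp
      show "eval e [n, prefix_code p j] 0" if "j < Suc (need n)" for j using ev[of j] that by simp
    qed
  qed
  then show ?thesis using comp_fun_eqI by blast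
qed

lemma comp_fun_identity: "\<exists>e. \<forall>p. comp_fun e p = Some p"
proof -
  have "\<exists>e. \<forall>p. comp_fun e p = Some (\<lambda>n. p n)"
    by (rule comp_fun_locally_recursive[of _ "\<lambda>n. n"]) (intro recursive_intros | simp)+
  then show ?thesis by simp
qed

lemma comp_fun_odd_digits: "\<exists>e. \<forall>p. comp_fun e p = Some (\<lambda>n. p (Suc (2 * n)))"
  by (rule comp_fun_locally_recursive[of _ "\<lambda>n. Suc (2 * n)"]) (intro recursive_intros | simp)+

lemma pairB_odd: "pairB p r (Suc (2 * n)) = r n"
  by (simp add: pairB_def)

lemma weihrauch_leI:
  assumes eK: "\<And>p. comp_fun eK p = Some (K p)"
    and eH: "\<And>q. comp_fun eH q = Some (H q)"
    and reduce: "\<And>p x. \<delta>X p = Some x \<Longrightarrow> f x \<noteq> {} \<Longrightarrow>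
      \<exists>z. \<delta>Z (K p) = Some z \<and> g z \<noteq> {} \<and>
        (\<forall>r w. \<delta>W r = Some w \<longrightarrow> w \<in> g z \<longrightarrow> (\<exists>y. \<delta>Y (H (pairB p r)) = Some y \<and> y \<in> f x))"
  shows "weihrauch_le \<delta>X \<delta>Y f \<delta>Z \<delta>W g"
  unfolding weihrauch_le_def
proof (rule exI[of _ eH], rule exI[of _ eK], intro allI impI)
  fix G
  assume G: "realizer \<delta>Z \<delta>W g G"
  show "realizer \<delta>X \<delta>Y f (\<lambda>p. case comp_fun eK p of None \<Rightarrow> None
      | Some k \<Rightarrow> (case G k of None \<Rightarrow> None | Some r \<Rightarrow> comp_fun eH (pairB p r)))"
    unfolding realizer_def
  proof (intro allI impI)
    fix p x
    assume "\<delta>X p = Some x \<and> f x \<noteq> {}"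
    then obtain z where z: "\<delta>Z (K p) = Some z" "g z \<noteq> {}"
      "\<forall>r w. \<delta>W r = Some w \<longrightarrow> w \<in> g z \<longrightarrow> (\<exists>y. \<delta>Y (H (pairB p r)) = Some y \<and> y \<in> f x)"
      using reduce by blast
    then obtain r w where "G (K p) = Some r" "\<delta>W r = Some w" "w \<in> g z"
      using G unfolding realizer_def by blast
    then show "\<exists>q y. (case comp_fun eK p of None \<Rightarrow> None
        | Some k \<Rightarrow> (case G k of None \<Rightarrow> None | Some r \<Rightarrow> comp_fun eH (pairB p r))) = Some q \<and>
        \<delta>Y q = Some y \<and> y \<in> f x"
      using z(3) eK eH by auto
  qed
qed


lemma dyadic_limit_unique:
  fixes x x' :: real
  assumes "\<forall>n. \<bar>q n - x\<bar> \<le> (1/2)^n" "\<forall>n. \<bar>q n - x'\<bar> \<le> (1/2)^n"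
  shows "x = x'"
proof (rule ccontr)
  assume "x \<noteq> x'"
  then obtain n where n: "(1/2::real)^n < \<bar>x - x'\<bar> / 2"
    using real_arch_pow_inv[of "\<bar>x - x'\<bar> / 2" "1/2"] by auto
  have "\<bar>x - x'\<bar> \<le> \<bar>q n - x\<bar> + \<bar>q n - x'\<bar>" by linarith
  also have "\<dots> \<le> 2 * (1/2)^n" using assms by (smt (verit))
  finally have "\<bar>x - x'\<bar> \<le> 2 * (1/2)^n" .
  moreover have "2 * (1/2::real)^n < \<bar>x - x'\<bar>" using mult_strict_left_mono[OF n, of 2] by simp
  ultimately show False by linarith
qed

lemma delta_R_eq_Some_iff: "delta_R q = Some x \<longleftrightarrow> (\<forall>n. \<bar>rat_dec (q n) - x\<bar> \<le> (1/2)^n)"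
proof
  assume "delta_R q = Some x"
  then obtain x0 where x0: "\<forall>n. \<bar>rat_dec (q n) - x0\<bar> \<le> (1/2)^n"
    and "(THE x. \<forall>n. \<bar>rat_dec (q n) - x\<bar> \<le> (1/2)^n) = x"
    unfolding delta_R_def by (auto split: if_splits)
  moreover have "(THE x. \<forall>n. \<bar>rat_dec (q n) - x\<bar> \<le> (1/2)^n) = x0"
    using x0 dyadic_limit_unique[of "\<lambda>n. rat_dec (q n)"] by (intro the_equality) blast+
  ultimately show "\<forall>n. \<bar>rat_dec (q n) - x\<bar> \<le> (1/2)^n" by simp
next
  assume x: "\<forall>n. \<bar>rat_dec (q n) - x\<bar> \<le> (1/2)^n"
  then have "(THE x. \<forall>n. \<bar>rat_dec (q n) - x\<bar> \<le> (1/2)^n) = x"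
    using dyadic_limit_unique[of "\<lambda>n. rat_dec (q n)"] by (intro the_equality) blast+
  then show "delta_R q = Some x" using x unfolding delta_R_def by auto
qed

definition named_set :: "baire \<Rightarrow> real set" where
  "named_set p = - (\<Union>n\<in>{n. p n \<noteq> 0}. interval_dec (p n - 1))"

lemma delta_A_eq: "delta_A p = Some (named_set p)"
  by (simp add: delta_A_def named_set_def)

lemma mem_named_set: "y \<in> named_set p \<longleftrightarrow> (\<forall>n. p n \<noteq> 0 \<longrightarrow> y \<notin> interval_dec (p n - 1))"
  by (auto simp: named_set_def)

lemma interval_dec_eq:
  "interval_dec k = {rat_dec (fst (prod_decode k)) <..< rat_dec (snd (prod_decode k))}"
  by (simp add: interval_dec_def case_prod_beta)

lemma closed_named_set: "closed (named_set p)"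
  unfolding named_set_def by (intro closed_Compl open_UN ballI) (simp add: interval_dec_eq)


text \<open>\<^const>\<open>rat_dec\<close> reads a code as \<open>(P - M) / D\<close> with natural numbers \<open>P, M, D\<close>;
  all arithmetic below is done on these natural numbers so that it is recursive.\<close>

definition int_decode_pos :: "nat \<Rightarrow> nat" where
  "int_decode_pos x = (if even x then x div 2 else 0)"

definition int_decode_neg :: "nat \<Rightarrow> nat" where
  "int_decode_neg x = (if even x then 0 else x div 2 + 1)"

lemma int_decode_eq: "int_decode x = int (int_decode_pos x) - int (int_decode_neg x)"
  by (auto simp: int_decode_def sum_decode_def int_decode_pos_def int_decode_neg_def)

definition rat_num_pos :: "nat \<Rightarrow> nat" where
  "rat_num_pos c = int_decode_pos (fst (prod_decode c))"

definition rat_num_neg :: "nat \<Rightarrow> nat" where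
  "rat_num_neg c = int_decode_neg (fst (prod_decode c))"

definition rat_den :: "nat \<Rightarrow> nat" where
  "rat_den c = Suc (snd (prod_decode c))"

lemma rat_dec_eq: "rat_dec c = (real (rat_num_pos c) - real (rat_num_neg c)) / real (rat_den c)"
  by (simp add: rat_dec_def case_prod_beta int_decode_eq rat_num_pos_def rat_num_neg_def rat_den_def)

definition rat_code :: "nat \<Rightarrow> nat \<Rightarrow> nat \<Rightarrow> nat" where
  "rat_code P M d = prod_encode (if M \<le> P then 2 * (P - M) else 2 * (M - P) - 1, d)"

lemma rat_dec_rat_code: "rat_dec (rat_code P M d) = (real P - real M) / real (Suc d)"
proof -
  have "rat_code P M d = prod_encode (int_encode (int P - int M), d)"
    by (auto simp: rat_code_def int_encode_def sum_encode_def nat_diff_distrib)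
  then show ?thesis by (simp add: rat_dec_def)
qed

definition rat_add_code :: "nat \<Rightarrow> nat \<Rightarrow> nat \<Rightarrow> nat" where
  "rat_add_code P M c =
     rat_code (rat_num_pos c + P * rat_den c) (rat_num_neg c + M * rat_den c) (snd (prod_decode c))"

lemma rat_dec_rat_add_code: "rat_dec (rat_add_code P M c) = rat_dec c + (real P - real M)"
proof -
  have "rat_dec (rat_add_code P M c) =
      (real (rat_num_pos c + P * rat_den c) - real (rat_num_neg c + M * rat_den c)) / real (rat_den c)"
    by (simp add: rat_add_code_def rat_dec_rat_code rat_den_def)
  also have "\<dots> = rat_dec c + (real P - real M)"
    unfolding rat_dec_eq by (simp add: field_simps rat_den_def)
  finally show ?thesis .
qed

definition rat_less_code :: "nat \<Rightarrow> nat \<Rightarrow> bool" where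
  "rat_less_code c c' \<longleftrightarrow> rat_num_pos c * rat_den c' + rat_num_neg c' * rat_den c
                        < rat_num_pos c' * rat_den c + rat_num_neg c * rat_den c'"

lemma rat_less_code_iff: "rat_less_code c c' \<longleftrightarrow> rat_dec c < rat_dec c'"
proof -
  have "rat_less_code c c' \<longleftrightarrow>
      real (rat_num_pos c) * real (rat_den c') + real (rat_num_neg c') * real (rat_den c)
      < real (rat_num_pos c') * real (rat_den c) + real (rat_num_neg c) * real (rat_den c')"
    unfolding rat_less_code_def by (simp only: of_nat_add[symmetric] of_nat_mult[symmetric] of_nat_less_iff)
  also have "\<dots> \<longleftrightarrow> rat_dec c < rat_dec c'"
  proof -
    have "real (rat_den c) > 0" "real (rat_den c') > 0" by (simp_all add: rat_den_def)
    then show ?thesis unfolding rat_dec_eq by (simp add: field_simps)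
  qed
  finally show ?thesis .
qed

definition rat_max_code :: "nat \<Rightarrow> nat \<Rightarrow> nat" where
  "rat_max_code c c' = (if rat_less_code c c' then c' else c)"

definition rat_min_code :: "nat \<Rightarrow> nat \<Rightarrow> nat" where
  "rat_min_code c c' = (if rat_less_code c c' then c else c')"

lemma rat_dec_rat_max_code: "rat_dec (rat_max_code c c') = max (rat_dec c) (rat_dec c')"
  by (simp add: rat_max_code_def rat_less_code_iff)

lemma rat_dec_rat_min_code: "rat_dec (rat_min_code c c') = min (rat_dec c) (rat_dec c')"
  by (simp add: rat_min_code_def rat_less_code_iff)

lemma recursive_int_decode_pos [recursive_intros]:
  "recursive n f \<Longrightarrow> recursive n (\<lambda>xs. int_decode_pos (f xs))"
  unfolding int_decode_pos_def by (intro recursive_intros)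

lemma recursive_int_decode_neg [recursive_intros]:
  "recursive n f \<Longrightarrow> recursive n (\<lambda>xs. int_decode_neg (f xs))"
  unfolding int_decode_neg_def by (intro recursive_intros)

lemma recursive_rat_code [recursive_intros]:
  "recursive n f \<Longrightarrow> recursive n g \<Longrightarrow> recursive n h \<Longrightarrow> recursive n (\<lambda>xs. rat_code (f xs) (g xs) (h xs))"
  unfolding rat_code_def by (intro recursive_intros)

lemma recursive_rat_add_code [recursive_intros]:
  "recursive n f \<Longrightarrow> recursive n g \<Longrightarrow> recursive n h \<Longrightarrow> recursive n (\<lambda>xs. rat_add_code (f xs) (g xs) (h xs))"
  unfolding rat_add_code_def rat_num_pos_def rat_num_neg_def rat_den_def by (intro recursive_intros)

lemma recursive_if_rat_less_code [recursive_intros]: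
  "recursive n f \<Longrightarrow> recursive n g \<Longrightarrow> recursive n a \<Longrightarrow> recursive n b \<Longrightarrow>
   recursive n (\<lambda>xs. if rat_less_code (f xs) (g xs) then a xs else b xs)"
  unfolding rat_less_code_def rat_num_pos_def rat_num_neg_def rat_den_def by (intro recursive_intros)

lemma recursive_rat_max_code [recursive_intros]:
  "recursive n f \<Longrightarrow> recursive n g \<Longrightarrow> recursive n (\<lambda>xs. rat_max_code (f xs) (g xs))"
  unfolding rat_max_code_def by (intro recursive_intros)

lemma recursive_rat_min_code [recursive_intros]:
  "recursive n f \<Longrightarrow> recursive n g \<Longrightarrow> recursive n (\<lambda>xs. rat_min_code (f xs) (g xs))"
  unfolding rat_min_code_def by (intro recursive_intros)


section \<open>Spreading a closed set over disjoint blocks\<close>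

text \<open>Block \<open>j\<close> is the interval \<open>[3j, 3j + 1]\<close>; it receives the translate of \<open>A \<inter> [m, m + 1]\<close>
  for the integer \<open>m = block_offset j\<close>. Every integer is the offset of infinitely many blocks.\<close>

definition block_offset :: "nat \<Rightarrow> int" where
  "block_offset j = int_decode (fst (prod_decode j))"

definition block_shift :: "nat \<Rightarrow> real" where
  "block_shift j = 3 * real j - real_of_int (block_offset j)"

lemma block_offset_prod_encode: "block_offset (prod_encode (int_encode m, t)) = m"
  by (simp add: block_offset_def)

definition shift_code :: "nat \<Rightarrow> nat \<Rightarrow> nat" where
  "shift_code j =
     rat_add_code (3 * j + int_decode_neg (fst (prod_decode j))) (int_decode_pos (fst (prod_decode j)))"

definition unshift_code :: "nat \<Rightarrow> nat \<Rightarrow> nat" where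
  "unshift_code j =
     rat_add_code (int_decode_pos (fst (prod_decode j))) (3 * j + int_decode_neg (fst (prod_decode j)))"

lemma rat_dec_shift_code: "rat_dec (shift_code j c) = rat_dec c + block_shift j"
  by (simp add: shift_code_def rat_dec_rat_add_code block_shift_def block_offset_def int_decode_eq)

lemma rat_dec_unshift_code: "rat_dec (unshift_code j c) = rat_dec c - block_shift j"
  by (simp add: unshift_code_def rat_dec_rat_add_code block_shift_def block_offset_def int_decode_eq)

lemma recursive_shift_code [recursive_intros]:
  "recursive n f \<Longrightarrow> recursive n g \<Longrightarrow> recursive n (\<lambda>xs. shift_code (f xs) (g xs))"
  unfolding shift_code_def by (intro recursive_intros)

lemma recursive_unshift_code [recursive_intros]:
  "recursive n f \<Longrightarrow> recursive n g \<Longrightarrow> recursive n (\<lambda>xs. unshift_code (f xs) (g xs))"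
  unfolding unshift_code_def by (intro recursive_intros)

text \<open>The name \<open>spread_name p\<close> enumerates three families of intervals: \<open>(-(i + 1), 0)\<close>,
  the gaps \<open>(3i + 1, 3i + 3)\<close> between blocks, and, for every block \<open>j\<close> and every interval
  \<open>I\<close> enumerated by \<open>p\<close>, the part of \<open>I + block_shift j\<close> near block \<open>j\<close>.\<close>

definition spread_name :: "baire \<Rightarrow> baire" where
  "spread_name p n = (case prod_decode n of (t, i) \<Rightarrow>
     if t = 0 then Suc (prod_encode (rat_code 0 (Suc i) 0, rat_code 0 0 0))
     else if t = 1 then Suc (prod_encode (rat_code (3 * i + 1) 0 0, rat_code (3 * i + 3) 0 0))
     else (case prod_decode i of (j, l) \<Rightarrow>
       if p l = 0 then 0
       else Suc (prod_encode
         (rat_max_code (shift_code j (fst (prod_decode (p l - 1)))) (rat_code (3 * j) 1 0),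
          rat_min_code (shift_code j (snd (prod_decode (p l - 1)))) (rat_code (3 * j + 2) 0 0)))))"

lemma interval_spread_name_negative:
  "spread_name p (prod_encode (0, i)) \<noteq> 0"
  "interval_dec (spread_name p (prod_encode (0, i)) - 1) = {- (real i + 1) <..< 0}"
  by (simp_all add: spread_name_def interval_dec_eq rat_dec_rat_code algebra_simps)

lemma interval_spread_name_gap:
  "spread_name p (prod_encode (1, i)) \<noteq> 0"
  "interval_dec (spread_name p (prod_encode (1, i)) - 1) = {3 * real i + 1 <..< 3 * real i + 3}"
  by (simp_all add: spread_name_def interval_dec_eq rat_dec_rat_code algebra_simps)

lemma interval_spread_name_block:
  assumes "2 \<le> t"
  shows "spread_name p (prod_encode (t, prod_encode (j, l))) \<noteq> 0 \<longleftrightarrow> p l \<noteq> 0"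
    and "p l \<noteq> 0 \<Longrightarrow> y \<in> interval_dec (spread_name p (prod_encode (t, prod_encode (j, l))) - 1) \<longleftrightarrow>
      y - block_shift j \<in> interval_dec (p l - 1) \<and> 3 * real j - 1 < y \<and> y < 3 * real j + 2"
  using assms
  by (auto simp: spread_name_def interval_dec_eq rat_dec_rat_code rat_dec_rat_max_code
      rat_dec_rat_min_code rat_dec_shift_code)

lemma of_nat_less_of_nat_plus_1_iff: "real a < real b + 1 \<longleftrightarrow> a \<le> b"
  by (metis less_Suc_eq_le of_nat_Suc of_nat_less_iff add.commute)

lemma mem_named_set_spread_nameD:
  assumes "y \<in> named_set (spread_name p)"
  shows "\<exists>j. 3 * real j \<le> y \<and> y \<le> 3 * real j + 1 \<and> y - block_shift j \<in> named_set p"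
proof -
  have avoid: "y \<notin> interval_dec (spread_name p n - 1)" if "spread_name p n \<noteq> 0" for n
    using assms that by (simp add: mem_named_set)
  have "0 \<le> y"
  proof (rule ccontr)
    assume "\<not> 0 \<le> y"
    then have "y \<in> {- (real (nat \<lceil>-y\<rceil>) + 1) <..< 0}"
      using le_of_int_ceiling[of "-y"] by (simp; linarith)
    then show False using avoid interval_spread_name_negative by metis
  qed
  define j where "j = nat \<lfloor>y / 3\<rfloor>"
  have j: "3 * real j \<le> y" "y < 3 * real j + 3"
    unfolding j_def using \<open>0 \<le> y\<close> by linarith+
  have "y \<le> 3 * real j + 1"
  proof (rule ccontr)
    assume "\<not> y \<le> 3 * real j + 1"
    then have "y \<in> {3 * real j + 1 <..< 3 * real j + 3}" using j by simp
    then show False using avoid interval_spread_name_gap by metis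
  qed
  moreover have "y - block_shift j \<in> named_set p"
    unfolding mem_named_set
  proof (intro allI impI notI)
    fix l
    assume "p l \<noteq> 0" "y - block_shift j \<in> interval_dec (p l - 1)"
    then show False
      using avoid[of "prod_encode (2, prod_encode (j, l))"]
        interval_spread_name_block[where t=2 and j=j and l=l] j \<open>y \<le> 3 * real j + 1\<close>
      by simp
  qed
  ultimately show ?thesis using j by blast
qed

lemma mem_named_set_spread_nameI:
  assumes j: "3 * real j \<le> y" "y \<le> 3 * real j + 1" and A: "y - block_shift j \<in> named_set p"
  shows "y \<in> named_set (spread_name p)"
  unfolding mem_named_set
proof (intro allI impI notI)
  fix n
  assume n: "spread_name p n \<noteq> 0" "y \<in> interval_dec (spread_name p n - 1)"
  obtain t i where ti: "n = prod_encode (t, i)" by (metis prod_decode_inverse surj_pair)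
  consider "t = 0" | "t = 1" | "2 \<le> t" by linarith
  then show False
  proof cases
    case 1
    then show ?thesis using n ti j interval_spread_name_negative by auto
  next
    case 2
    then have "3 * real i + 1 < y" "y < 3 * real i + 3" using n ti interval_spread_name_gap by auto
    then have "real i < real j + 1" "real j < real i + 1" using j by linarith+
    then show ?thesis unfolding of_nat_less_of_nat_plus_1_iff using \<open>3 * real i + 1 < y\<close> j
      by simp
  next
    case 3
    obtain j' l where "i = prod_encode (j', l)" by (metis prod_decode_inverse surj_pair)
    with 3 n ti interval_spread_name_block[where t=t and j=j' and l=l]
    have l: "p l \<noteq> 0" "y - block_shift j' \<in> interval_dec (p l - 1)"
      and "3 * real j' - 1 < y" "y < 3 * real j' + 2" by auto
    then have "real j' < real j + 1" "real j < real j' + 1" using j by linarith+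
    then have "j' = j" unfolding of_nat_less_of_nat_plus_1_iff by simp
    then show ?thesis using A l by (auto simp: mem_named_set)
  qed
qed

lemma mem_named_set_spread_name:
  "y \<in> named_set (spread_name p) \<longleftrightarrow>
    (\<exists>j. 3 * real j \<le> y \<and> y \<le> 3 * real j + 1 \<and> y - block_shift j \<in> named_set p)"
  using mem_named_set_spread_nameD mem_named_set_spread_nameI by blast


definition block_index :: "nat \<Rightarrow> nat" where
  "block_index c = (LEAST j. rat_less_code c (rat_code (3 * j + 2) 0 0))"

lemma block_index_eq:
  assumes "\<bar>rat_dec c - y\<bar> \<le> 1/4" "3 * real j \<le> y" "y \<le> 3 * real j + 1"
  shows "block_index c = j"
  unfolding block_index_def
proof (rule Least_equality)
  have c: "y - 1/4 \<le> rat_dec c" "rat_dec c \<le> y + 1/4" using assms(1) by linarith+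
  then show "rat_less_code c (rat_code (3 * j + 2) 0 0)"
    using assms by (simp add: rat_less_code_iff rat_dec_rat_code)
  fix j'
  assume "rat_less_code c (rat_code (3 * j' + 2) 0 0)"
  then have "real j < real j' + 1"
    using assms c by (simp add: rat_less_code_iff rat_dec_rat_code)
  then show "j \<le> j'" by (simp add: of_nat_less_of_nat_plus_1_iff)
qed

lemma recursive_block_index [recursive_intros]:
  assumes "recursive n f"
  shows "recursive n (\<lambda>xs. block_index (f xs))"
proof -
  let ?g = "\<lambda>ys. if rat_less_code (ys!1) (rat_code (3 * ys!0 + 2) 0 0) then 0 else 1 :: nat"
  have "recursive 1 (\<lambda>xs. LEAST m. ?g (m # xs) = 0)"
  proof (rule recursive_Least)
    show "recursive (Suc 1) ?g" by (intro recursive_intros) simp_all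
    show "\<exists>m. ?g (m # xs) = 0" for xs :: "nat list"
    proof
      show "?g (nat \<lceil>rat_dec (xs!0)\<rceil> # xs) = 0"
        using real_nat_ceiling_ge[of "rat_dec (xs!0)"]
        by (simp add: rat_less_code_iff rat_dec_rat_code)
    qed
  qed
  moreover have "(LEAST m. ?g (m # xs) = 0) = block_index (xs!0)" for xs :: "nat list"
    unfolding block_index_def by (rule arg_cong[where f=Least]) auto
  ultimately have "recursive 1 (\<lambda>xs. block_index (xs!0))" by simp
  from recursive_compose1[OF this assms] show ?thesis .
qed

definition unspread_name :: "baire \<Rightarrow> baire" where
  "unspread_name r n = unshift_code (block_index (r 2)) (r n)"

lemma delta_R_unspread_name:
  assumes "delta_R r = Some y" "3 * real j \<le> y" "y \<le> 3 * real j + 1"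
  shows "delta_R (unspread_name r) = Some (y - block_shift j)"
proof -
  have r: "\<forall>n. \<bar>rat_dec (r n) - y\<bar> \<le> (1/2)^n"
    using assms(1) delta_R_eq_Some_iff by blast
  have "\<bar>rat_dec (r 2) - y\<bar> \<le> 1/4" using r[rule_format, of 2] by (simp add: power2_eq_square)
  then have "block_index (r 2) = j" using assms(2,3) by (rule block_index_eq)
  then show ?thesis
    using r by (simp add: delta_R_eq_Some_iff unspread_name_def rat_dec_unshift_code)
qed

lemma snd_prod_decode_le: "snd (prod_decode n) \<le> n"
  by (metis le_prod_encode_2 prod_decode_inverse prod.collapse)

lemma comp_fun_spread_name: "\<exists>e. \<forall>p. comp_fun e p = Some (spread_name p)"
proof (rule comp_fun_locally_recursive[of _ "\<lambda>n. n"])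
  show "recursive 2 (\<lambda>xs. spread_name (\<lambda>i. list_nth_code i (xs!1)) (xs!0))"
    unfolding spread_name_def case_prod_beta by (intro recursive_intros) simp_all
  show "recursive 1 (\<lambda>xs. xs!0)" by (intro recursive_intros) simp
  fix n and p p' :: baire
  assume "\<forall>i\<le>n. p i = p' i"
  moreover have "snd (prod_decode (snd (prod_decode n))) \<le> n"
    using snd_prod_decode_le le_trans by blast
  ultimately show "spread_name p n = spread_name p' n"
    by (simp add: spread_name_def case_prod_beta)
qed

lemma comp_fun_unspread_name_odd_digits:
  "\<exists>e. \<forall>q. comp_fun e q = Some (unspread_name (\<lambda>n. q (Suc (2 * n))))"
proof (rule comp_fun_locally_recursive[of _ "\<lambda>n. Suc (2 * n) + 5"])
  show "recursive 2 (\<lambda>xs. unspread_name (\<lambda>n. list_nth_code (Suc (2 * n)) (xs!1)) (xs!0))"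
    unfolding unspread_name_def by (intro recursive_intros) simp_all
  show "recursive 1 (\<lambda>xs. Suc (2 * xs!0) + 5)" by (intro recursive_intros) simp
qed (simp add: unspread_name_def)


section \<open>Measure of the spread set\<close>

lemma emeasure_lborel_translate:
  fixes C :: "'a::euclidean_space set"
  assumes "C \<in> sets borel"
  shows "emeasure lborel ((\<lambda>y. y - s) -` C) = emeasure lborel C"
proof -
  have "(\<lambda>y. y - s) -` C \<in> sets borel"
    using measurable_sets_borel[OF _ assms, of "\<lambda>y. y - s"] by simp
  then have "emeasure lborel ((\<lambda>y. y - s) -` C)
      = emeasure lborel ((+) s -` ((\<lambda>y. y - s) -` C) \<inter> space lborel)"
    by (subst lborel_distr_plus[symmetric, of s]) (rule emeasure_distr; simp)
  also have "(+) s -` ((\<lambda>y. y - s) -` C) \<inter> space lborel = C" by auto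
  finally show ?thesis .
qed

lemma emeasure_Int_unit_interval_pos:
  fixes A :: "real set"
  assumes "A \<in> sets borel" "0 < emeasure lborel A"
  shows "\<exists>m::int. 0 < emeasure lborel (A \<inter> {of_int m .. of_int m + 1})"
proof (rule ccontr)
  define N where "N k = A \<inter> {of_int (int_decode k) .. of_int (int_decode k) + 1}" for k
  have N: "range N \<subseteq> sets lborel" using assms(1) by (auto simp: N_def)
  assume "\<nexists>m::int. 0 < emeasure lborel (A \<inter> {of_int m .. of_int m + 1})"
  then have "emeasure lborel (\<Union>k. N k) = 0"
    using N by (intro emeasure_UN_eq_0) (auto simp: N_def not_gr_zero)
  moreover have "A \<subseteq> (\<Union>k. N k)"
  proof
    fix x
    assume "x \<in> A"
    then have "x \<in> N (int_encode \<lfloor>x\<rfloor>)" by (simp add: N_def)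
    then show "x \<in> (\<Union>k. N k)" by blast
  qed
  then have "emeasure lborel A \<le> emeasure lborel (\<Union>k. N k)"
    using N by (intro emeasure_mono) auto
  ultimately show False using assms(2) by simp
qed

lemma ennreal_less_of_nat_mult:
  fixes c :: ennreal
  assumes "0 < c"
  shows "\<exists>T::nat. ennreal \<epsilon> < of_nat T * c"
proof (cases c)
  case (real r)
  then have "0 < r" using assms by simp
  obtain T :: nat where T: "max 0 (\<epsilon> / r) < real T" using reals_Archimedean2 by blast
  then have "\<epsilon> < real T * r" using \<open>0 < r\<close> by (simp add: divide_less_eq)
  then have "ennreal \<epsilon> < ennreal (real T * r)"
    using \<open>0 < r\<close> T by (intro ennreal_lessI) simp_all
  also have "ennreal (real T * r) = of_nat T * c"
    using real \<open>0 < r\<close> by (simp add: ennreal_mult ennreal_of_nat_eq_real_of_nat)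
  finally show ?thesis by blast
next
  case top
  then show ?thesis by (intro exI[of _ 1]) simp
qed

lemma emeasure_gt_of_disjoint_translates:
  fixes C S :: "'a::euclidean_space set"
  assumes "C \<in> sets borel" "S \<in> sets borel" "0 < emeasure lborel C"
    and sub: "\<And>t. (\<lambda>y. y - s t) -` C \<subseteq> S"
    and disj: "disjoint_family (\<lambda>t::nat. (\<lambda>y. y - s t) -` C)"
  shows "ennreal \<epsilon> < emeasure lborel S"
proof -
  define D where "D t = (\<lambda>y. y - s t) -` C" for t
  have D: "D t \<in> sets lborel" for t
    using measurable_sets_borel[OF _ assms(1), of "\<lambda>y. y - s t"] by (simp add: D_def)
  obtain T :: nat where "ennreal \<epsilon> < of_nat T * emeasure lborel C"
    using ennreal_less_of_nat_mult[OF assms(3)] by blast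
  also have "of_nat T * emeasure lborel C = (\<Sum>t<T. emeasure lborel (D t))"
    using assms(1) by (simp add: D_def emeasure_lborel_translate)
  also have "\<dots> = emeasure lborel (\<Union>t<T. D t)"
    using D disj by (intro sum_emeasure) (auto simp: D_def disjoint_family_on_def)
  also have "\<dots> \<le> emeasure lborel S"
    using D sub assms(2) by (intro emeasure_mono) (auto simp: D_def)
  finally show ?thesis .
qed

lemma emeasure_named_set_spread_name:
  assumes "0 < emeasure lborel (named_set p)"
  shows "ennreal \<epsilon> < emeasure lborel (named_set (spread_name p))"
proof -
  have borel: "named_set q \<in> sets borel" for q by (simp add: closed_named_set borel_closed)
  obtain m :: int where m: "0 < emeasure lborel (named_set p \<inter> {of_int m .. of_int m + 1})"
    using emeasure_Int_unit_interval_pos[OF borel assms] by blast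
  define C where "C = named_set p \<inter> {of_int m .. of_int m + 1}"
  define j where "j t = prod_encode (int_encode m, t)" for t
  have block: "3 * real (j t) \<le> y \<and> y \<le> 3 * real (j t) + 1 \<and> y - block_shift (j t) \<in> named_set p"
    if "y \<in> (\<lambda>y. y - block_shift (j t)) -` C" for y t
    using that by (auto simp: C_def j_def block_shift_def block_offset_prod_encode)
  show ?thesis
  proof (rule emeasure_gt_of_disjoint_translates)
    show "C \<in> sets borel" using borel by (simp add: C_def)
    show "0 < emeasure lborel C" using m by (simp add: C_def)
    show "(\<lambda>y. y - block_shift (j t)) -` C \<subseteq> named_set (spread_name p)" for t
      using block mem_named_set_spread_nameI by blast
    show "disjoint_family (\<lambda>t. (\<lambda>y. y - block_shift (j t)) -` C)"
      unfolding disjoint_family_on_def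
    proof (intro ballI impI, rule ccontr)
      fix t t'
      assume "t \<noteq> t'" "(\<lambda>y. y - block_shift (j t)) -` C \<inter> (\<lambda>y. y - block_shift (j t')) -` C \<noteq> {}"
      then obtain y where "y \<in> (\<lambda>y. y - block_shift (j t)) -` C" "y \<in> (\<lambda>y. y - block_shift (j t')) -` C"
        by blast
      then have "real (j t) < real (j t') + 1" "real (j t') < real (j t) + 1"
        using block[of y t] block[of y t'] by linarith+
      then have "j t = j t'" by (simp add: of_nat_less_of_nat_plus_1_iff)
      then show False using \<open>t \<noteq> t'\<close> by (simp add: j_def)
    qed
  qed (rule borel)
qed


lemma PC_R_eq_P_gt_C_R:
  assumes "P_gt_C_R \<epsilon> A \<noteq> {}"
  shows "PC_R A = P_gt_C_R \<epsilon> A"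
proof -
  have "closed A" "ennreal \<epsilon> < emeasure lborel A"
    using assms by (auto simp: P_gt_C_R_def split: if_splits)
  moreover from this(2) have "0 < emeasure lborel A" by (rule le_less_trans[OF zero_le])
  ultimately show ?thesis by (simp add: PC_R_def P_gt_C_R_def)
qed

lemma weihrauch_le_P_gt_C_R_PC_R: "weihrauch_le delta_A delta_R (P_gt_C_R \<epsilon>) delta_A delta_R PC_R"
proof -
  obtain eK where eK: "\<And>p. comp_fun eK p = Some p" using comp_fun_identity by blast
  obtain eH where eH: "\<And>q. comp_fun eH q = Some (\<lambda>n. q (Suc (2 * n)))"
    using comp_fun_odd_digits by blast
  show ?thesis
    by (rule weihrauch_leI[OF eK eH]) (auto simp: pairB_odd PC_R_eq_P_gt_C_R)
qed

lemma weihrauch_le_PC_R_P_gt_C_R: "weihrauch_le delta_A delta_R PC_R delta_A delta_R (P_gt_C_R \<epsilon>)"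
proof -
  obtain eK where eK: "\<And>p. comp_fun eK p = Some (spread_name p)"
    using comp_fun_spread_name by blast
  obtain eH where eH: "\<And>q. comp_fun eH q = Some (unspread_name (\<lambda>n. q (Suc (2 * n))))"
    using comp_fun_unspread_name_odd_digits by blast
  show ?thesis
  proof (rule weihrauch_leI[OF eK eH])
    fix p A
    assume "delta_A p = Some A" "PC_R A \<noteq> {}"
    then have A: "A = named_set p" "0 < emeasure lborel A" "PC_R A = A"
      by (auto simp: delta_A_eq PC_R_def P_gt_C_R_def split: if_splits)
    let ?B = "named_set (spread_name p)"
    have "ennreal \<epsilon> < emeasure lborel ?B"
      using A by (simp add: emeasure_named_set_spread_name)
    then have B: "P_gt_C_R \<epsilon> ?B = ?B" "?B \<noteq> {}"
      using closed_named_set by (auto simp: P_gt_C_R_def)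
    have "\<exists>y. delta_R (unspread_name r) = Some y \<and> y \<in> PC_R A"
      if "delta_R r = Some w" "w \<in> ?B" for r w
    proof -
      obtain j where "3 * real j \<le> w" "w \<le> 3 * real j + 1" "w - block_shift j \<in> named_set p"
        using \<open>w \<in> ?B\<close> mem_named_set_spread_name by blast
      then show ?thesis using delta_R_unspread_name[OF \<open>delta_R r = Some w\<close>] A by auto
    qed
    then show "\<exists>z. delta_A (spread_name p) = Some z \<and> P_gt_C_R \<epsilon> z \<noteq> {} \<and>
        (\<forall>r w. delta_R r = Some w \<longrightarrow> w \<in> P_gt_C_R \<epsilon> z \<longrightarrow>
          (\<exists>y. delta_R (unspread_name (\<lambda>n. pairB p r (Suc (2 * n)))) = Some y \<and> y \<in> PC_R A))"
      using B by (auto simp: delta_A_eq pairB_odd)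
  qed
qed

theorem theorem11p5:
  fixes \<epsilon> :: real
  assumes "\<epsilon> \<ge> 0"
  shows "weihrauch_eq delta_A delta_R PC_R delta_A delta_R (P_gt_C_R \<epsilon>)"
  unfolding weihrauch_eq_def
  using weihrauch_le_PC_R_P_gt_C_R weihrauch_le_P_gt_C_R_PC_R by blast

end
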